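(* Assume (A1)–(A2) below and let $C_1,C_2,C_3\ge0$ be constants depending only on the bounds in (A1)–(A2). Let $\varepsilon,\hat\varepsilon\in[0,\bar\varepsilon]$, $\gamma,\hat\gamma\in[\underline\gamma,\bar\gamma]$, and let $\hat w:[0,T]\times(0,\ell)\to[-\bar w,\bar w]$ with $\partial_\tau\hat w,\partial_x\hat w\in L^\infty(0,T;L^2(0,\ell))$. Define $\hat e_1=0$, $\hat e_2=(\varepsilon^2-\hat\varepsilon^2)(\partial_\tau\hat w+\tfrac12\partial_x|\hat w|^2)+(\gamma-\hat\gamma)|\hat w|\hat w$ and $\mathcal{P}(\hat{\boldsymbol e})=C_1\|\hat e_1\|_{L^2}^2+C_2\|\hat e_2\|_{L^2}^2+C_3\|\hat e_2\|_{L^{3/2}}^{3/2}$ (norms on $(0,\ell)$ at a fixed time). Then for all times $$\mathcal{P}(\hat{\boldsymbol e})\le\hat C_3'|\varepsilon^2-\hat\varepsilon^2|^{3/2}+\hat C_3''|\gamma-\hat\gamma|^{3/2},$$ with constants $\hat C_3',\hat C_3''$ depending only on the bounds in (A1)–(A2) and on $\|\partial_\tau\hat w\|_{L^\infty(0,T;L^2)}$ and $\|\partial_x\hat w\|_{L^\infty(0,T;L^2)}$.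
   Context: (A1): positive constants $\underline\rho\le\bar\rho$, $\bar w$, $\bar\varepsilon$, a smooth strictly convex $P$ with $\rho P''(\rho)\ge4\bar\varepsilon^2\bar w^2$ for $\underline\rho\le\rho\le\bar\rho$; the cross section satisfies $0<\underline a\le a\le\bar a$ on $(0,\ell)$; $|gz|\le\bar g\bar z$. (A2): $0\le\varepsilon,\hat\varepsilon\le\bar\varepsilon$, $0<\underline\gamma\le\gamma,\hat\gamma\le\bar\gamma$, and velocities are bounded by $\bar w$ in absolute value. Here $\hat{\boldsymbol e}=(\hat e_1,\hat e_2)$ is the residual obtained when a solution with parameters $(\hat\varepsilon,\hat\gamma)$ of the rescaled gas equations is inserted into the equations with parameters $(\varepsilon,\gamma)$. *)

theory Defs
  imports "HOL-Analysis.Analysis"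
begin

definition test_fun :: "real \<Rightarrow> real \<Rightarrow> (real \<times> real \<Rightarrow> real)
    \<Rightarrow> (real \<times> real \<Rightarrow> real \<times> real \<Rightarrow> real) \<Rightarrow> bool" where
  "test_fun T l phi D \<longleftrightarrow>
     (\<exists>K. compact K \<and> K \<subseteq> box (0,0) (T,l) \<and> (\<forall>p. p \<notin> K \<longrightarrow> phi p = 0)) \<and>
     (\<forall>p. (phi has_derivative D p) (at p)) \<and>
     continuous_on UNIV (\<lambda>p. D p (1,0)) \<and> continuous_on UNIV (\<lambda>p. D p (0,1))"

text \<open>v is the weak partial derivative of w in direction dir ((1,0): time, (0,1): space)
  on (0,T)x(0,l).\<close>
definition weak_pderiv :: "real \<Rightarrow> real \<Rightarrow> (real \<Rightarrow> real \<Rightarrow> real) \<Rightarrow> real \<times> real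
    \<Rightarrow> (real \<Rightarrow> real \<Rightarrow> real) \<Rightarrow> bool" where
  "weak_pderiv T l w dir v \<longleftrightarrow>
     (\<forall>phi D. test_fun T l phi D \<longrightarrow>
        set_integrable lborel (box (0,0) (T,l)) (\<lambda>p. v (fst p) (snd p) * phi p) \<and>
        (LINT p:box (0,0) (T,l)|lborel. w (fst p) (snd p) * D p dir)
          = - (LINT p:box (0,0) (T,l)|lborel. v (fst p) (snd p) * phi p))"

definition L2sq :: "real \<Rightarrow> (real \<Rightarrow> real) \<Rightarrow> real" where
  "L2sq l f = (LINT x:{0<..<l}|lborel. (f x)^2)"

definition L32p :: "real \<Rightarrow> (real \<Rightarrow> real) \<Rightarrow> real" where
  "L32p l f = (LINT x:{0<..<l}|lborel. \<bar>f x\<bar> powr (3/2))"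

definition Pfun :: "real \<Rightarrow> real \<Rightarrow> real \<Rightarrow> real \<Rightarrow> (real \<Rightarrow> real) \<Rightarrow> (real \<Rightarrow> real) \<Rightarrow> real" where
  "Pfun l C1 C2 C3 e1 e2 = C1 * L2sq l e1 + C2 * L2sq l e2 + C3 * L32p l e2"

end

theory Submission
  imports Defs
begin

text \<open>With \<open>a = eps\<^sup>2 - epsh\<^sup>2\<close> and \<open>b = gam - gamh\<close>, the residual at a fixed time is
  \<open>a f + b |w| w\<close> with \<open>f = wt + w wx\<close>. Since \<open>|w| \<le> wbar\<close>, both its square and its
  \<open>3/2\<close>-power are bounded pointwise by an affine function of \<open>m = 2 wt\<^sup>2 + 2 wbar\<^sup>2 wx\<^sup>2\<close>,
  whose integral is controlled by the \<open>L\<^sup>\<infinity>(L\<^sup>2)\<close> bounds on the derivatives. This bounds \<open>P\<close>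
  by constants times \<open>a\<^sup>2\<close>, \<open>b\<^sup>2\<close>, \<open>|a|\<^bsup>3/2\<^esup>\<close>, \<open>|b|\<^bsup>3/2\<^esup>\<close>, and the squares are absorbed
  into the \<open>3/2\<close>-powers because \<open>a\<^sup>2 \<le> |a|\<^bsup>3/2\<^esup> \<surd>A\<close> whenever \<open>|a| \<le> A\<close>.\<close>

lemma square_add_le:
  fixes x y :: real
  shows "(x + y)^2 \<le> 2 * x^2 + 2 * y^2"
proof -
  have "0 \<le> (x - y)^2" by simp
  then show ?thesis by (simp add: power2_eq_square algebra_simps)
qed

lemma abs_diff_squares_le:
  fixes x y c :: real
  assumes "0 \<le> x" "x \<le> c" "0 \<le> y" "y \<le> c"
  shows "\<bar>x^2 - y^2\<bar> \<le> c^2"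
proof -
  have "x^2 \<le> c^2" "y^2 \<le> c^2"
    using assms by (auto intro: power_mono)
  then show ?thesis
    using zero_le_power2[of x] zero_le_power2[of y] by linarith
qed

lemma powr_add_le_two_powr:
  fixes u v p :: real
  assumes "0 \<le> u" "0 \<le> v" "0 \<le> p"
  shows "(u + v) powr p \<le> 2 powr p * (u powr p + v powr p)"
proof -
  have "(u + v) powr p \<le> (2 * max u v) powr p"
    using assms by (intro powr_mono2) auto
  also have "\<dots> = 2 powr p * max u v powr p"
    using assms by (simp add: powr_mult)
  also have "max u v powr p \<le> u powr p + v powr p"
    by (simp add: max_def)
  finally show ?thesis by simp
qed

lemma abs_powr_le_one_plus_square:
  fixes x r :: real
  assumes "0 \<le> r" "r \<le> 2"
  shows "\<bar>x\<bar> powr r \<le> 1 + x^2"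
proof (cases "\<bar>x\<bar> \<le> 1")
  case True
  then have "\<bar>x\<bar> powr r \<le> 1" using assms by (intro powr_le1) auto
  then show ?thesis by (simp add: add_increasing2)
next
  case False
  then have "\<bar>x\<bar> powr r \<le> \<bar>x\<bar> powr 2" using assms by (intro powr_mono) auto
  also have "\<dots> = x^2" using False by (simp add: powr_realpow)
  finally show ?thesis by simp
qed

lemma square_le_abs_powr_mult:
  fixes x r B :: real
  assumes "\<bar>x\<bar> \<le> B" "0 \<le> r" "r \<le> 2"
  shows "x^2 \<le> \<bar>x\<bar> powr r * B powr (2 - r)"
proof (cases "x = 0")
  case False
  have "x^2 = \<bar>x\<bar> powr r * \<bar>x\<bar> powr (2 - r)"
    using False by (simp add: powr_realpow flip: powr_add)
  also have "\<dots> \<le> \<bar>x\<bar> powr r * B powr (2 - r)"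
    using assms by (intro mult_left_mono powr_mono2) auto
  finally show ?thesis .
qed simp

lemma square_le_abs_powr_three_halves_mult_sqrt:
  fixes x B :: real
  assumes "\<bar>x\<bar> \<le> B"
  shows "x^2 \<le> \<bar>x\<bar> powr (3/2) * sqrt B"
proof -
  have "0 \<le> B" using assms by linarith
  then show ?thesis
    using square_le_abs_powr_mult[OF assms, of "3/2"] by (simp add: powr_half_sqrt)
qed

lemma material_term_square_le:
  fixes p q w W :: real
  assumes "\<bar>w\<bar> \<le> W"
  shows "(p + w * q)^2 \<le> 2 * p^2 + 2 * W^2 * q^2"
proof -
  have "w^2 \<le> W^2" using assms abs_le_square_iff[of w W] by simp
  then have "(w * q)^2 \<le> W^2 * q^2" by (simp add: power_mult_distrib mult_right_mono)
  then show ?thesis using square_add_le[of p "w * q"] by linarith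
qed

lemma residual_square_le:
  fixes a b f w W :: real
  assumes "\<bar>w\<bar> \<le> W"
  shows "(a * f + b * \<bar>w\<bar> * w)^2 \<le> 2 * a^2 * f^2 + 2 * b^2 * W^4"
proof -
  have "(b * \<bar>w\<bar> * w)^2 = b^2 * \<bar>w\<bar>^4"
    by (simp add: power_mult_distrib power2_eq_square power4_eq_xxxx)
  also have "\<dots> \<le> b^2 * W^4"
    using assms by (intro mult_left_mono power_mono) auto
  finally show ?thesis using square_add_le[of "a * f" "b * \<bar>w\<bar> * w"]
    by (simp add: power_mult_distrib)
qed

lemma residual_powr_le:
  fixes a b f w W :: real
  assumes "\<bar>w\<bar> \<le> W"
  shows "\<bar>a * f + b * \<bar>w\<bar> * w\<bar> powr (3/2)
    \<le> 2 powr (3/2) * (\<bar>a\<bar> powr (3/2) * (1 + f^2) + \<bar>b\<bar> powr (3/2) * W powr 3)"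
proof -
  have "\<bar>a * f + b * \<bar>w\<bar> * w\<bar> \<le> \<bar>a\<bar> * \<bar>f\<bar> + \<bar>b\<bar> * \<bar>w\<bar>^2"
    using abs_triangle_ineq[of "a * f" "b * \<bar>w\<bar> * w"] by (simp add: abs_mult power2_eq_square mult.assoc)
  then have "\<bar>a * f + b * \<bar>w\<bar> * w\<bar> powr (3/2) \<le> (\<bar>a\<bar> * \<bar>f\<bar> + \<bar>b\<bar> * \<bar>w\<bar>^2) powr (3/2)"
    by (intro powr_mono2) auto
  also have "\<dots> \<le> 2 powr (3/2) * ((\<bar>a\<bar> * \<bar>f\<bar>) powr (3/2) + (\<bar>b\<bar> * \<bar>w\<bar>^2) powr (3/2))"
    by (intro powr_add_le_two_powr) auto
  also have "(\<bar>a\<bar> * \<bar>f\<bar>) powr (3/2) \<le> \<bar>a\<bar> powr (3/2) * (1 + f^2)"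
    by (simp add: powr_mult mult_left_mono abs_powr_le_one_plus_square)
  also have "(\<bar>b\<bar> * \<bar>w\<bar>^2) powr (3/2) \<le> \<bar>b\<bar> powr (3/2) * W powr 3"
  proof -
    have "\<bar>w\<bar>^2 = \<bar>w\<bar> powr 2"
      using powr_realpow'[of "\<bar>w\<bar>" 2] by simp
    then have "(\<bar>w\<bar>^2) powr (3/2) = \<bar>w\<bar> powr 3"
      by (simp only: powr_powr) simp
    then show ?thesis using assms by (simp add: powr_mult mult_left_mono powr_mono2)
  qed
  finally show ?thesis by simp
qed

text \<open>No integrability of \<open>f\<close> is required: a non-integrable \<open>f\<close> has integral \<open>0 \<le> \<integral>g\<close>.
  This spares us the measurability of the residual.\<close>
lemma set_integral_mono_nonneg_majorant:
  fixes f g :: "'a \<Rightarrow> real"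
  assumes "set_integrable M A g" "\<And>x. x \<in> A \<Longrightarrow> f x \<le> g x" "\<And>x. x \<in> A \<Longrightarrow> 0 \<le> g x"
  shows "(LINT x:A|M. f x) \<le> (LINT x:A|M. g x)"
  unfolding set_lebesgue_integral_def
  using assms integral_mono'[of M "\<lambda>x. indicator A x *\<^sub>R g x" "\<lambda>x. indicator A x *\<^sub>R f x"]
  by (auto simp: set_integrable_def indicator_def)

lemma set_integral_le_affine_majorant:
  fixes h m :: "real \<Rightarrow> real" and \<alpha> \<beta> F l :: real
  assumes "0 \<le> l" "0 \<le> \<alpha>"
    and m: "set_integrable lborel {0<..<l} m" "(LINT x:{0<..<l}|lborel. m x) \<le> F"
    and "\<And>x. x \<in> {0<..<l} \<Longrightarrow> h x \<le> \<alpha> * m x + \<beta>"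
    and "\<And>x. x \<in> {0<..<l} \<Longrightarrow> 0 \<le> \<alpha> * m x + \<beta>"
  shows "(LINT x:{0<..<l}|lborel. h x) \<le> \<alpha> * F + \<beta> * l"
proof -
  have const: "set_integrable lborel {0<..<l} (\<lambda>x. \<beta>)"
    unfolding set_integrable_def using assms
    by (intro integrable_scaleR_left integrable_real_indicator) auto
  have const_integral: "(LINT x:{0<..<l}|lborel. \<beta>) = \<beta> * l"
    using assms by (subst set_integral_const) auto
  have "(LINT x:{0<..<l}|lborel. h x) \<le> (LINT x:{0<..<l}|lborel. \<alpha> * m x + \<beta>)"
    using assms const by (intro set_integral_mono_nonneg_majorant) auto
  also have "\<dots> = \<alpha> * (LINT x:{0<..<l}|lborel. m x) + \<beta> * l"
    using m const const_integral by simp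
  also have "\<dots> \<le> \<alpha> * F + \<beta> * l"
    using m assms by (simp add: mult_left_mono)
  finally show ?thesis .
qed

lemma material_majorant_integral:
  fixes p q :: "real \<Rightarrow> real" and l W Mt Mx :: real
  assumes p: "set_integrable lborel {0<..<l} (\<lambda>x. (p x)^2)" "L2sq l p \<le> Mt^2"
    and q: "set_integrable lborel {0<..<l} (\<lambda>x. (q x)^2)" "L2sq l q \<le> Mx^2"
  shows "set_integrable lborel {0<..<l} (\<lambda>x. 2 * (p x)^2 + 2 * W^2 * (q x)^2)"
    and "(LINT x:{0<..<l}|lborel. 2 * (p x)^2 + 2 * W^2 * (q x)^2) \<le> 2 * Mt^2 + 2 * W^2 * Mx^2"
proof -
  show "set_integrable lborel {0<..<l} (\<lambda>x. 2 * (p x)^2 + 2 * W^2 * (q x)^2)"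
    using p q by auto
  have "(LINT x:{0<..<l}|lborel. 2 * (p x)^2 + 2 * W^2 * (q x)^2) = 2 * L2sq l p + 2 * W^2 * L2sq l q"
    using p q by (simp add: L2sq_def)
  also have "\<dots> \<le> 2 * Mt^2 + 2 * W^2 * Mx^2"
    using p q by (intro add_mono mult_left_mono) auto
  finally show "(LINT x:{0<..<l}|lborel. 2 * (p x)^2 + 2 * W^2 * (q x)^2) \<le> 2 * Mt^2 + 2 * W^2 * Mx^2" .
qed

lemma L2sq_residual_le:
  fixes f m w :: "real \<Rightarrow> real" and a b l W F :: real
  assumes "0 \<le> l" and w: "\<And>x. x \<in> {0<..<l} \<Longrightarrow> \<bar>w x\<bar> \<le> W"
    and m: "set_integrable lborel {0<..<l} m" "(LINT x:{0<..<l}|lborel. m x) \<le> F"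
    and f: "\<And>x. x \<in> {0<..<l} \<Longrightarrow> (f x)^2 \<le> m x"
  shows "L2sq l (\<lambda>x. a * f x + b * \<bar>w x\<bar> * w x) \<le> 2 * a^2 * F + 2 * b^2 * W^4 * l"
  unfolding L2sq_def
proof (rule set_integral_le_affine_majorant[OF \<open>0 \<le> l\<close> _ m])
  fix x assume x: "x \<in> {0<..<l}"
  have "2 * a^2 * (f x)^2 \<le> 2 * a^2 * m x"
    using f[OF x] by (simp add: mult_left_mono)
  then show "(a * f x + b * \<bar>w x\<bar> * w x)^2 \<le> 2 * a^2 * m x + 2 * b^2 * W^4"
    using residual_square_le[OF w[OF x], of a "f x" b] by linarith
  have "0 \<le> m x" using f[OF x] by (meson order_trans zero_le_power2)
  then show "0 \<le> 2 * a^2 * m x + 2 * b^2 * W^4"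
    by (simp add: zero_le_even_power)
qed simp

lemma L32p_residual_le:
  fixes f m w :: "real \<Rightarrow> real" and a b l W F :: real
  assumes "0 \<le> l" and w: "\<And>x. x \<in> {0<..<l} \<Longrightarrow> \<bar>w x\<bar> \<le> W"
    and m: "set_integrable lborel {0<..<l} m" "(LINT x:{0<..<l}|lborel. m x) \<le> F"
    and f: "\<And>x. x \<in> {0<..<l} \<Longrightarrow> (f x)^2 \<le> m x"
  shows "L32p l (\<lambda>x. a * f x + b * \<bar>w x\<bar> * w x)
    \<le> 2 powr (3/2) * (\<bar>a\<bar> powr (3/2) * (l + F) + \<bar>b\<bar> powr (3/2) * W powr 3 * l)"
proof -
  define K :: real where "K = 2 powr (3/2)"
  define \<alpha> where "\<alpha> = K * \<bar>a\<bar> powr (3/2)"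
  define \<beta> where "\<beta> = K * (\<bar>a\<bar> powr (3/2) + \<bar>b\<bar> powr (3/2) * W powr 3)"
  have "L32p l (\<lambda>x. a * f x + b * \<bar>w x\<bar> * w x) \<le> \<alpha> * F + \<beta> * l"
    unfolding L32p_def
  proof (rule set_integral_le_affine_majorant[OF \<open>0 \<le> l\<close> _ m])
    fix x assume x: "x \<in> {0<..<l}"
    have "\<bar>a * f x + b * \<bar>w x\<bar> * w x\<bar> powr (3/2)
        \<le> K * (\<bar>a\<bar> powr (3/2) * (1 + (f x)^2) + \<bar>b\<bar> powr (3/2) * W powr 3)"
      unfolding K_def by (rule residual_powr_le[OF w[OF x]])
    also have "\<dots> \<le> K * (\<bar>a\<bar> powr (3/2) * (1 + m x) + \<bar>b\<bar> powr (3/2) * W powr 3)"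
      using f[OF x] by (intro mult_left_mono add_mono) (auto simp: K_def)
    also have "\<dots> = \<alpha> * m x + \<beta>"
      by (simp add: \<alpha>_def \<beta>_def algebra_simps)
    finally show "\<bar>a * f x + b * \<bar>w x\<bar> * w x\<bar> powr (3/2) \<le> \<alpha> * m x + \<beta>" .
    have "0 \<le> m x" using f[OF x] by (meson order_trans zero_le_power2)
    then show "0 \<le> \<alpha> * m x + \<beta>"
      by (simp add: \<alpha>_def \<beta>_def K_def)
  qed (simp add: \<alpha>_def K_def)
  also have "\<alpha> * F + \<beta> * l = K * (\<bar>a\<bar> powr (3/2) * (l + F) + \<bar>b\<bar> powr (3/2) * W powr 3 * l)"
    by (simp add: \<alpha>_def \<beta>_def algebra_simps)
  finally show ?thesis unfolding K_def .
qed

lemma Pfun_residual_le: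
  fixes p q w :: "real \<Rightarrow> real" and a b A B l W Mt Mx C1 C2 C3 :: real
  assumes "0 \<le> l" and w: "\<And>x. x \<in> {0<..<l} \<Longrightarrow> \<bar>w x\<bar> \<le> W"
    and p: "set_integrable lborel {0<..<l} (\<lambda>x. (p x)^2)" "L2sq l p \<le> Mt^2"
    and q: "set_integrable lborel {0<..<l} (\<lambda>x. (q x)^2)" "L2sq l q \<le> Mx^2"
    and a: "\<bar>a\<bar> \<le> A" and b: "\<bar>b\<bar> \<le> B" and "0 \<le> C2" "0 \<le> C3"
  defines "F \<equiv> 2 * Mt^2 + 2 * W^2 * Mx^2"
  shows "Pfun l C1 C2 C3 (\<lambda>x. 0) (\<lambda>x. a * (p x + w x * q x) + b * \<bar>w x\<bar> * w x)
    \<le> (2 * C2 * F * sqrt A + C3 * 2 powr (3/2) * (l + F)) * \<bar>a\<bar> powr (3/2)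
     + (2 * C2 * W^4 * l * sqrt B + C3 * 2 powr (3/2) * W powr 3 * l) * \<bar>b\<bar> powr (3/2)"
proof -
  define f where "f = (\<lambda>x. p x + w x * q x)"
  define m where "m = (\<lambda>x. 2 * (p x)^2 + 2 * W^2 * (q x)^2)"
  have m: "set_integrable lborel {0<..<l} m" "(LINT x:{0<..<l}|lborel. m x) \<le> F"
    unfolding m_def F_def using material_majorant_integral[OF p q, of W] by simp_all
  have f: "(f x)^2 \<le> m x" if "x \<in> {0<..<l}" for x
    unfolding f_def m_def using w[OF that] by (rule material_term_square_le)
  have "0 \<le> F"
  proof -
    have "(LINT x:{0<..<l}|lborel. 0) \<le> (LINT x:{0<..<l}|lborel. m x)"
      using m(1) f by (intro set_integral_mono_nonneg_majorant) (auto intro: order_trans[OF zero_le_power2])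
    then show ?thesis using m(2) by simp
  qed
  have L2: "L2sq l (\<lambda>x. a * f x + b * \<bar>w x\<bar> * w x)
      \<le> 2 * F * sqrt A * \<bar>a\<bar> powr (3/2) + 2 * W^4 * l * sqrt B * \<bar>b\<bar> powr (3/2)"
  proof -
    have "2 * a^2 * F \<le> 2 * F * sqrt A * \<bar>a\<bar> powr (3/2)"
      using square_le_abs_powr_three_halves_mult_sqrt[OF a] \<open>0 \<le> F\<close>
      by (simp add: mult_left_mono mult_ac)
    moreover have "2 * b^2 * W^4 * l \<le> 2 * W^4 * l * sqrt B * \<bar>b\<bar> powr (3/2)"
      using mult_right_mono[OF square_le_abs_powr_three_halves_mult_sqrt[OF b], of "2 * W^4 * l"]
        \<open>0 \<le> l\<close> by (simp add: mult_ac zero_le_even_power)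
    ultimately show ?thesis
      using L2sq_residual_le[of l w W m F f a b, OF \<open>0 \<le> l\<close> w m f] by linarith
  qed
  have "Pfun l C1 C2 C3 (\<lambda>x. 0) (\<lambda>x. a * f x + b * \<bar>w x\<bar> * w x)
      = C2 * L2sq l (\<lambda>x. a * f x + b * \<bar>w x\<bar> * w x) + C3 * L32p l (\<lambda>x. a * f x + b * \<bar>w x\<bar> * w x)"
    by (simp add: Pfun_def L2sq_def)
  also have "\<dots> \<le> C2 * (2 * F * sqrt A * \<bar>a\<bar> powr (3/2) + 2 * W^4 * l * sqrt B * \<bar>b\<bar> powr (3/2))
      + C3 * (2 powr (3/2) * (\<bar>a\<bar> powr (3/2) * (l + F) + \<bar>b\<bar> powr (3/2) * W powr 3 * l))"
    using L2 L32p_residual_le[of l w W m F f a b, OF \<open>0 \<le> l\<close> w m f] assms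
    by (intro add_mono mult_left_mono) auto
  finally show ?thesis by (simp add: f_def algebra_simps)
qed

lemma Pfun_residual_AE_le:
  fixes w wt wx :: "real \<Rightarrow> real \<Rightarrow> real" and a b A B l T W Mt Mx C1 C2 C3 :: real
  assumes "0 \<le> l" and w: "\<forall>t\<in>{0..T}. \<forall>x\<in>{0<..<l}. \<bar>w t x\<bar> \<le> W"
    and "AE t in lborel. t \<in> {0..T} \<longrightarrow>
          set_integrable lborel {0<..<l} (\<lambda>x. (wt t x)^2) \<and> L2sq l (wt t) \<le> Mt^2"
    and "AE t in lborel. t \<in> {0..T} \<longrightarrow>
          set_integrable lborel {0<..<l} (\<lambda>x. (wx t x)^2) \<and> L2sq l (wx t) \<le> Mx^2"
    and "\<bar>a\<bar> \<le> A" "\<bar>b\<bar> \<le> B" "0 \<le> C2" "0 \<le> C3"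
  defines "F \<equiv> 2 * Mt^2 + 2 * W^2 * Mx^2"
  shows "AE t in lborel. t \<in> {0..T} \<longrightarrow>
    Pfun l C1 C2 C3 (\<lambda>x. 0) (\<lambda>x. a * (wt t x + w t x * wx t x) + b * \<bar>w t x\<bar> * w t x)
    \<le> (2 * C2 * F * sqrt A + C3 * 2 powr (3/2) * (l + F)) * \<bar>a\<bar> powr (3/2)
     + (2 * C2 * W^4 * l * sqrt B + C3 * 2 powr (3/2) * W powr 3 * l) * \<bar>b\<bar> powr (3/2)"
  using assms(3,4)
proof eventually_elim
  case (elim t)
  show ?case
    using elim w Pfun_residual_le[of l "w t" W "wt t" Mt "wx t" Mx a A b B C2 C3 C1] assms(1,5-)
    by (auto simp: F_def)
qed

theorem corollary4p6:
  fixes epsbar wbar glo ghi l C1 C2 C3 Mt Mx :: real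
  assumes "epsbar > 0" "wbar > 0" "0 < glo" "glo \<le> ghi" "l > 0"
    and "C1 \<ge> 0" "C2 \<ge> 0" "C3 \<ge> 0" "Mt \<ge> 0" "Mx \<ge> 0"
  shows "\<exists>C' C''. C' \<ge> 0 \<and> C'' \<ge> 0 \<and>
    (\<forall>T eps epsh gam gamh (w :: real \<Rightarrow> real \<Rightarrow> real) wt wx.
       T > 0 \<and> eps \<in> {0..epsbar} \<and> epsh \<in> {0..epsbar} \<and>
       gam \<in> {glo..ghi} \<and> gamh \<in> {glo..ghi} \<and>
       (\<forall>t\<in>{0..T}. \<forall>x\<in>{0<..<l}. \<bar>w t x\<bar> \<le> wbar) \<and>
       (\<lambda>p. w (fst p) (snd p)) \<in> borel_measurable lborel \<and>
       (\<lambda>p. wt (fst p) (snd p)) \<in> borel_measurable lborel \<and>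
       (\<lambda>p. wx (fst p) (snd p)) \<in> borel_measurable lborel \<and>
       weak_pderiv T l w (1,0) wt \<and> weak_pderiv T l w (0,1) wx \<and>
       (AE t in lborel. t \<in> {0..T} \<longrightarrow>
          set_integrable lborel {0<..<l} (\<lambda>x. (wt t x)^2) \<and> L2sq l (wt t) \<le> Mt^2) \<and>
       (AE t in lborel. t \<in> {0..T} \<longrightarrow>
          set_integrable lborel {0<..<l} (\<lambda>x. (wx t x)^2) \<and> L2sq l (wx t) \<le> Mx^2)
     \<longrightarrow>
       (AE t in lborel. t \<in> {0..T} \<longrightarrow>
          Pfun l C1 C2 C3 (\<lambda>x. 0)
            (\<lambda>x. (eps^2 - epsh^2) * (wt t x + w t x * wx t x)
                 + (gam - gamh) * \<bar>w t x\<bar> * w t x)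
          \<le> C' * \<bar>eps^2 - epsh^2\<bar> powr (3/2) + C'' * \<bar>gam - gamh\<bar> powr (3/2)))"
proof -
  define F where "F = 2 * Mt^2 + 2 * wbar^2 * Mx^2"
  define C' where "C' = 2 * C2 * F * epsbar + C3 * 2 powr (3/2) * (l + F)"
  define C'' where "C'' = 2 * C2 * wbar^4 * l * sqrt (ghi - glo) + C3 * 2 powr (3/2) * wbar powr 3 * l"
  show ?thesis
  proof (rule exI[of _ C'], rule exI[of _ C''], intro conjI allI impI, goal_cases)
    case 1 show ?case using assms by (simp add: C'_def F_def)
  next
    case 2 show ?case using assms by (simp add: C''_def)
  next
    case (3 T eps epsh gam gamh w wt wx)
    then have "\<bar>eps^2 - epsh^2\<bar> \<le> epsbar^2" "\<bar>gam - gamh\<bar> \<le> ghi - glo"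
      by (auto intro: abs_diff_squares_le)
    with 3 show ?case
      using Pfun_residual_AE_le[of l T w wbar wt Mt wx Mx "eps^2 - epsh^2" "epsbar^2"
          "gam - gamh" "ghi - glo" C2 C3 C1] assms
      by (auto simp: C'_def C''_def F_def)
  qed
qed

end
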